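(* In the blocking model with S-phase $S=[s,t]$ of length $|S|=t-s$, no more than $\lceil |S|^{-1}\rceil$ critical clusters can persist.
   Context: Cell cycle model: each of finitely many cells has a position $x_i\in[0,1)$ on the normalized cell cycle, viewed as a circle (reaching $1$ means division and restart at $0$; the population is fixed). There is a responsive interval $R=[r,s]$ preceding the S-phase $S=[s,t]$, $0\le r<s<t\le1$. Blocking model with threshold $\tau>0$: all cells move with $dx_i/dt=1$, except that whenever the number of cells in $S$ is at least $\tau$, cells arriving at $s$ are stopped there (blocked from entering $S$) until the number of cells in $S$ drops below $\tau$, at which moment all cells accumulated at $s$ enter $S$ together. A cluster is a group of cells occupying the same position (synchronized); it is critical if it contains at least $\tau$ cells. A critical cluster persists if it continues to exist for all future time along the trajectory. *)

theory Defs
  imports "HOL-Analysis.Analysis"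
begin

text \<open>A trajectory is given by a
continuous lift y :: real => 'c => real; the position of cell i on the
normalized cell cycle (the circle [0,1)) at time tm is frac (y tm i).\<close>

definition pos :: "(real \<Rightarrow> 'c \<Rightarrow> real) \<Rightarrow> real \<Rightarrow> 'c \<Rightarrow> real" where
  "pos y tm i = frac (y tm i)"

text \<open>Number of cells currently inside the S-phase (cells held at the entry
point s are blocked from entering and not counted; cells reaching t leave).\<close>

definition num_in_S :: "real \<Rightarrow> real \<Rightarrow> (real \<Rightarrow> 'c::finite \<Rightarrow> real) \<Rightarrow> real \<Rightarrow> nat" where
  "num_in_S s t y tm = card {j. s < pos y tm j \<and> pos y tm j < t}"

definition blocking_trajectory ::
  "real \<Rightarrow> real \<Rightarrow> real \<Rightarrow> (real \<Rightarrow> 'c::finite \<Rightarrow> real) \<Rightarrow> bool" where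
  "blocking_trajectory s t thr y \<longleftrightarrow>
     (\<forall>i. continuous_on {0..} (\<lambda>tm. y tm i)) \<and>
     (\<forall>tm\<ge>0. \<forall>i. \<exists>\<epsilon>>0.
        (if pos y tm i = s \<and> real (num_in_S s t y tm) \<ge> thr
         then (\<forall>h\<in>{0..<\<epsilon>}. y (tm + h) i = y tm i)
         else (\<forall>h\<in>{0..<\<epsilon>}. y (tm + h) i = y tm i + h)))"

definition is_cluster :: "(real \<Rightarrow> 'c \<Rightarrow> real) \<Rightarrow> real \<Rightarrow> 'c set \<Rightarrow> bool" where
  "is_cluster y tm C \<longleftrightarrow> (\<exists>i. C = {j. pos y tm j = pos y tm i})"

definition critical_cluster :: "real \<Rightarrow> (real \<Rightarrow> 'c::finite \<Rightarrow> real) \<Rightarrow> real \<Rightarrow> 'c set \<Rightarrow> bool" where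
  "critical_cluster thr y tm C \<longleftrightarrow> is_cluster y tm C \<and> real (card C) \<ge> thr"

definition persists :: "(real \<Rightarrow> 'c \<Rightarrow> real) \<Rightarrow> real \<Rightarrow> 'c set \<Rightarrow> bool" where
  "persists y tm0 C \<longleftrightarrow> (\<forall>tm\<ge>tm0. is_cluster y tm C)"

end

theory Submission
  imports Defs
begin

text \<open>Every cell eventually enters S unblocked: a cell held at s forever would keep S
  saturated for longer than the transit time t - s, whereas a saturated S admits no cells and
  empties within that time. Let a persistent critical cluster A enter S at time \<sigma>. During
  A's next lap [\<sigma>, \<sigma> + 1) every other persistent critical cluster, never meeting A,
  must also pass s and enter S. A critical cluster saturates S during its transit, so two such
  entries are at least t - s apart, and at most \<lceil>1 / (t - s)\<rceil> of them fit into
  one lap.\<close>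

lemma real_right_continuation_induct:
  fixes a b :: real and P :: "real \<Rightarrow> bool"
  assumes "a \<le> b" and "P a"
    and step: "\<And>x. a \<le> x \<Longrightarrow> x < b \<Longrightarrow> P x \<Longrightarrow> \<exists>e>0. \<forall>h\<in>{0..<e}. x + h \<le> b \<longrightarrow> P (x + h)"
    and left_limit: "\<And>x. a < x \<Longrightarrow> x \<le> b \<Longrightarrow> \<forall>u\<in>{a..<x}. P u \<Longrightarrow> P x"
  shows "\<forall>x\<in>{a..b}. P x"
proof -
  define S where "S = {x\<in>{a..b}. \<forall>u\<in>{a..x}. P u}"
  define T where "T = Sup S"
  have "a \<in> S" using assms(1,2) by (auto simp: S_def)
  have bdd: "bdd_above S" unfolding S_def by (rule bdd_aboveI[of _ b]) auto
  have "a \<le> T" unfolding T_def using \<open>a \<in> S\<close> bdd by (rule cSup_upper)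
  have "T \<le> b" unfolding T_def using \<open>a \<in> S\<close> by (intro cSup_least) (auto simp: S_def)
  have below_T: "\<forall>u\<in>{a..<T}. P u"
  proof
    fix u assume u: "u \<in> {a..<T}"
    then obtain x where "x \<in> S" "u < x"
      using \<open>a \<in> S\<close> less_cSup_iff[OF _ bdd] by (auto simp: T_def)
    then show "P u" using u by (auto simp: S_def)
  qed
  then have "P T"
    using left_limit[of T] \<open>a \<le> T\<close> \<open>T \<le> b\<close> \<open>P a\<close> by (cases "T = a") auto
  with below_T have "T \<in> S" using \<open>a \<le> T\<close> \<open>T \<le> b\<close> by (auto simp: S_def)
  have "T = b"
  proof (rule ccontr)
    assume "T \<noteq> b"
    with \<open>T \<le> b\<close> have "T < b" by simp
    then obtain e where "e > 0" and e: "\<forall>h\<in>{0..<e}. T + h \<le> b \<longrightarrow> P (T + h)"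
      using step \<open>a \<le> T\<close> \<open>P T\<close> by blast
    define x where "x = min (T + e/2) b"
    have "\<forall>u\<in>{a..x}. P u"
    proof
      fix u assume u: "u \<in> {a..x}"
      show "P u"
      proof (cases "u \<le> T")
        case True then show ?thesis using \<open>T \<in> S\<close> u by (auto simp: S_def)
      next
        case False
        then have "u - T \<in> {0..<e}" "T + (u - T) \<le> b" using u \<open>e > 0\<close> by (auto simp: x_def)
        then show ?thesis using e by fastforce
      qed
    qed
    then have "x \<in> S" using \<open>a \<le> T\<close> \<open>T < b\<close> \<open>e > 0\<close> by (auto simp: S_def x_def)
    then have "x \<le> T" unfolding T_def using bdd by (rule cSup_upper)
    then show False using \<open>T < b\<close> \<open>e > 0\<close> by (auto simp: x_def)
  qed
  then show ?thesis using \<open>T \<in> S\<close> by (auto simp: S_def)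
qed

lemma continuous_on_left_limit_in_closed:
  fixes f :: "real \<Rightarrow> real"
  assumes "continuous_on {a..x} f" "a < x" "closed S" "\<And>u. u \<in> {a..<x} \<Longrightarrow> f u \<in> S"
  shows "f x \<in> S"
proof (rule Lim_in_closed_set[OF \<open>closed S\<close>])
  show "(f \<longlongrightarrow> f x) (at_left x)"
    using assms(1,2) by (metis at_within_Icc_at_left atLeastAtMost_iff continuous_on order_refl order_less_imp_le)
  show "\<forall>\<^sub>F u in at_left x. f u \<in> S"
    using eventually_at_left_real[OF \<open>a < x\<close>] by eventually_elim (use assms(4) in auto)
qed simp

lemma floor_constant_if_never_integer:
  fixes g :: "real \<Rightarrow> real"
  assumes "a \<le> b" "continuous_on {a..b} g" "\<And>x. x \<in> {a..b} \<Longrightarrow> g x \<notin> \<int>"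
  shows "\<lfloor>g b\<rfloor> = \<lfloor>g a\<rfloor>"
proof (rule ccontr)
  assume "\<lfloor>g b\<rfloor> \<noteq> \<lfloor>g a\<rfloor>"
  then consider "g a \<le> of_int \<lfloor>g b\<rfloor>" "of_int \<lfloor>g b\<rfloor> \<le> g b"
    | "g b \<le> of_int \<lfloor>g a\<rfloor>" "of_int \<lfloor>g a\<rfloor> \<le> g a"
    by (smt (verit, ccfv_SIG) floor_le_iff le_floor_iff of_int_floor_le of_int_less_iff)
  then obtain k :: int and x where "x \<in> {a..b}" "g x = of_int k"
  proof cases
    case 1 then show ?thesis using IVT'[OF 1 \<open>a \<le> b\<close> assms(2)] that by force
  next
    case 2 then show ?thesis using IVT2'[OF 2 \<open>a \<le> b\<close> assms(2)] that by force
  qed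
  then show False using assms(3) by (metis Ints_of_int)
qed

lemma card_separated_le:
  fixes F :: "real set"
  assumes "F \<subseteq> {a..<b}" "D > 0" "\<And>x z. x \<in> F \<Longrightarrow> z \<in> F \<Longrightarrow> x < z \<Longrightarrow> x + D \<le> z"
  shows "card F \<le> nat \<lceil>(b - a) / D\<rceil>"
proof -
  define slot where "slot x = nat \<lfloor>(x - a) / D\<rfloor>" for x
  have "slot x < slot z" if "x \<in> F" "z \<in> F" "x < z" for x z
  proof -
    have "(x - a) / D + 1 = (x + D - a) / D" using \<open>D > 0\<close> by (simp add: field_simps)
    also have "\<dots> \<le> (z - a) / D"
      using assms(3)[OF that] \<open>D > 0\<close> by (simp add: divide_right_mono)
    finally have "(x - a) / D + 1 \<le> (z - a) / D" .
    moreover have "0 \<le> (x - a) / D" using that assms(1,2) by auto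
    ultimately show ?thesis unfolding slot_def by linarith
  qed
  then have "inj_on slot F" by (metis inj_on_def linorder_neqE nat_neq_iff)
  moreover have "slot ` F \<subseteq> {..<nat \<lceil>(b - a) / D\<rceil>}"
  proof
    fix n assume "n \<in> slot ` F"
    then obtain x where "x \<in> F" "n = slot x" by blast
    moreover have "(x - a) / D < (b - a) / D" "0 \<le> (x - a) / D"
      using \<open>x \<in> F\<close> assms(1,2) by (auto simp: divide_strict_right_mono)
    moreover have "of_int \<lfloor>(x - a) / D\<rfloor> \<le> (x - a) / D" "(b - a) / D \<le> of_int \<lceil>(b - a) / D\<rceil>"
      by (rule of_int_floor_le, rule le_of_int_ceiling)
    ultimately show "n \<in> {..<nat \<lceil>(b - a) / D\<rceil>}" unfolding slot_def by simp linarith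
  qed
  ultimately show ?thesis by (metis card_inj_on_le card_lessThan finite_lessThan)
qed

lemma cluster_eq_level_set:
  assumes "is_cluster y tm C" "i \<in> C"
  shows "C = {j. pos y tm j = pos y tm i}"
  using assms by (auto simp: is_cluster_def)

lemma critical_cluster_in_S_saturates:
  fixes y :: "real \<Rightarrow> 'c::finite \<Rightarrow> real"
  assumes "is_cluster y tm C" "thr \<le> real (card C)" "i \<in> C" "s < pos y tm i" "pos y tm i < t"
  shows "thr \<le> real (num_in_S s t y tm)"
proof -
  have "C \<subseteq> {j. s < pos y tm j \<and> pos y tm j < t}"
    using cluster_eq_level_set[OF assms(1,3)] assms(4,5) by auto
  then have "card C \<le> num_in_S s t y tm" unfolding num_in_S_def by (intro card_mono) auto
  with assms(2) show ?thesis by linarith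
qed

lemma persistent_clusters_eqI:
  assumes "persists y tm0 C" "persists y tm0 C'" "tm0 \<le> tm" "i \<in> C" "j \<in> C'"
    and "pos y tm i = pos y tm j"
  shows "C = C'"
proof -
  have "is_cluster y tm C" "is_cluster y tm C'" using assms(1-3) by (auto simp: persists_def)
  then show ?thesis using cluster_eq_level_set assms(4-6) by metis
qed

locale blocking_dynamics =
  fixes s t thr :: real and y :: "real \<Rightarrow> 'c::finite \<Rightarrow> real"
  assumes trajectory: "blocking_trajectory s t thr y"
begin

definition held :: "real \<Rightarrow> 'c \<Rightarrow> bool" where
  "held tm i \<longleftrightarrow> pos y tm i = s \<and> thr \<le> real (num_in_S s t y tm)"

lemma continuous_on_lift:
  assumes "0 \<le> a"
  shows "continuous_on {a..b} (\<lambda>tm. y tm i)"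
proof (rule continuous_on_subset)
  show "continuous_on {0..} (\<lambda>tm. y tm i)"
    using trajectory unfolding blocking_trajectory_def by blast
qed (use assms in auto)

lemma held_stays_locally:
  assumes "0 \<le> tm" "held tm i"
  shows "\<exists>e>0. \<forall>h\<in>{0..<e}. y (tm + h) i = y tm i"
  using trajectory assms unfolding blocking_trajectory_def held_def by (metis (no_types, lifting))

lemma unheld_moves_locally:
  assumes "0 \<le> tm" "\<not> held tm i"
  shows "\<exists>e>0. \<forall>h\<in>{0..<e}. y (tm + h) i = y tm i + h"
  using trajectory assms unfolding blocking_trajectory_def held_def by (metis (no_types, lifting))

lemma lift_mono:
  assumes "0 \<le> a" "a \<le> b"
  shows "y a i \<le> y b i"
proof -
  have "\<forall>x\<in>{a..b}. y a i \<le> y x i"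
  proof (rule real_right_continuation_induct)
    fix x assume x: "a \<le> x" "x < b" "y a i \<le> y x i"
    have "0 \<le> x" using assms x by linarith
    show "\<exists>e>0. \<forall>h\<in>{0..<e}. x + h \<le> b \<longrightarrow> y a i \<le> y (x + h) i"
    proof (cases "held x i")
      case True
      then show ?thesis using held_stays_locally[OF \<open>0 \<le> x\<close>] x(3) by fastforce
    next
      case False
      then show ?thesis using unheld_moves_locally[OF \<open>0 \<le> x\<close>] x(3) by fastforce
    qed
  next
    fix x assume "a < x" "x \<le> b" "\<forall>u\<in>{a..<x}. y a i \<le> y u i"
    then show "y a i \<le> y x i"
      using continuous_on_left_limit_in_closed[OF continuous_on_lift[OF \<open>0 \<le> a\<close>], of x "{y a i..}"]
      by auto
  qed (use assms in auto)
  then show ?thesis using assms by auto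
qed

lemma moves_freely:
  assumes "0 \<le> a" "0 \<le> L"
    and unheld: "\<forall>tm\<in>{a..<a+L}. y tm i = y a i + (tm - a) \<longrightarrow> \<not> held tm i"
  shows "\<forall>h\<in>{0..L}. y (a + h) i = y a i + h"
proof -
  have "\<forall>x\<in>{a..a+L}. y x i - x = y a i - a"
  proof (rule real_right_continuation_induct)
    fix x assume x: "a \<le> x" "x < a + L" "y x i - x = y a i - a"
    with unheld have "\<not> held x i" by auto
    moreover have "0 \<le> x" using assms x by linarith
    ultimately obtain e where "e > 0" "\<forall>h\<in>{0..<e}. y (x + h) i = y x i + h"
      using unheld_moves_locally by blast
    then show "\<exists>e>0. \<forall>h\<in>{0..<e}. x + h \<le> a + L \<longrightarrow> y (x + h) i - (x + h) = y a i - a"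
      using x(3) by auto
  next
    fix x assume "a < x" and const: "\<forall>u\<in>{a..<x}. y u i - u = y a i - a"
    have "continuous_on {a..x} (\<lambda>u. y u i - u)"
      by (intro continuous_on_diff continuous_on_lift continuous_on_id) (fact \<open>0 \<le> a\<close>)
    then have "y x i - x \<in> {y a i - a}"
      using continuous_on_left_limit_in_closed[OF _ \<open>a < x\<close> closed_singleton] const by blast
    then show "y x i - x = y a i - a" by simp
  qed (use assms(2) in auto)
  then show ?thesis by (smt (verit, del_insts) atLeastAtMost_iff)
qed

lemma stays_put:
  assumes "0 \<le> a" "0 \<le> L"
    and held: "\<forall>tm\<in>{a..<a+L}. y tm i = y a i \<longrightarrow> held tm i"
  shows "\<forall>tm\<in>{a..a+L}. y tm i = y a i"
proof (rule real_right_continuation_induct)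
  fix x assume x: "a \<le> x" "x < a + L" "y x i = y a i"
  with held have "held x i" by auto
  moreover have "0 \<le> x" using assms(1) x(1) by linarith
  ultimately obtain e where "e > 0" "\<forall>h\<in>{0..<e}. y (x + h) i = y x i"
    using held_stays_locally by blast
  then show "\<exists>e>0. \<forall>h\<in>{0..<e}. x + h \<le> a + L \<longrightarrow> y (x + h) i = y a i"
    using x(3) by auto
next
  fix x assume "a < x" "x \<le> a + L" and const: "\<forall>u\<in>{a..<x}. y u i = y a i"
  have "y x i \<in> {y a i}"
    using continuous_on_left_limit_in_closed[OF continuous_on_lift[OF \<open>0 \<le> a\<close>] \<open>a < x\<close> closed_singleton]
      const by blast
  then show "y x i = y a i" by simp
qed (use assms(2) in auto)

lemma crosses_unheld:
  assumes "0 \<le> a" "a \<le> b" "y a i \<le> l" "l < y b i"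
  shows "\<exists>\<sigma>\<in>{a..<b}. y \<sigma> i = l \<and> \<not> held \<sigma> i"
proof (rule ccontr)
  assume no_crossing: "\<not> ?thesis"
  have "\<forall>x\<in>{a..b}. y x i \<le> l"
  proof (rule real_right_continuation_induct)
    fix x assume x: "a \<le> x" "x < b" "y x i \<le> l"
    show "\<exists>e>0. \<forall>h\<in>{0..<e}. x + h \<le> b \<longrightarrow> y (x + h) i \<le> l"
    proof (cases "y x i = l")
      case True
      with no_crossing x have "held x i" by auto
      moreover have "0 \<le> x" using assms(1) x(1) by linarith
      ultimately obtain e where "e > 0" "\<forall>h\<in>{0..<e}. y (x + h) i = y x i"
        using held_stays_locally by blast
      then show ?thesis using True by auto
    next
      case False
      with x have "l - y x i > 0" by simp
      moreover have "continuous_on {x..b} (\<lambda>tm. y tm i)"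
        using assms(1) x(1) by (intro continuous_on_lift) linarith
      ultimately obtain d where "d > 0"
        and d: "\<forall>x'\<in>{x..b}. dist x' x < d \<longrightarrow> dist (y x' i) (y x i) < l - y x i"
        using x unfolding continuous_on_iff by (meson atLeastAtMost_iff less_imp_le order_refl)
      have "y (x + h) i \<le> l" if "h \<in> {0..<d}" "x + h \<le> b" for h
        using d[rule_format, of "x + h"] that by (auto simp: dist_real_def)
      with \<open>d > 0\<close> show ?thesis by blast
    qed
  next
    fix x assume "a < x" "x \<le> b" "\<forall>u\<in>{a..<x}. y u i \<le> l"
    then show "y x i \<le> l"
      using continuous_on_left_limit_in_closed[OF continuous_on_lift[OF \<open>0 \<le> a\<close>], of x "{..l}"]
      by auto
  qed (use assms(2,3) in auto)
  then have "y b i \<le> l" using assms(2) by simp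
  with assms(4) show False by simp
qed

end

lemma not_Ints_strictly_between:
  fixes x :: real
  assumes "of_int k < x" "x < of_int k + 1"
  shows "x \<notin> \<int>"
proof
  assume "x \<in> \<int>"
  then obtain j where "x = of_int j" by (auto elim: Ints_cases)
  with assms show False by simp
qed

locale blocking_model = blocking_dynamics s t thr y
  for s t thr :: real and y :: "real \<Rightarrow> 'c::finite \<Rightarrow> real" +
  assumes s_pos: "0 < s" and s_lt_t: "s < t" and t_le_1: "t \<le> 1" and thr_pos: "0 < thr"
begin

lemma pos_eq_s_iff: "pos y tm i = s \<longleftrightarrow> y tm i - s \<in> \<int>"
  using s_pos s_lt_t t_le_1 by (simp add: pos_def frac_unique_iff)

lemma moves_freely_between_lifts:
  assumes "0 \<le> a" "0 \<le> L" "\<not> held a i"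
    and "of_int k \<le> y a i - s" "y a i - s + L \<le> of_int k + 1"
  shows "\<forall>h\<in>{0..L}. y (a + h) i = y a i + h"
proof (rule moves_freely[OF assms(1,2)], intro ballI impI)
  fix tm assume tm: "tm \<in> {a..<a+L}" and free: "y tm i = y a i + (tm - a)"
  show "\<not> held tm i"
  proof (cases "tm = a")
    case False
    with tm free assms(4,5) have "y tm i - s \<notin> \<int>"
      by (intro not_Ints_strictly_between[of k]) auto
    then show ?thesis by (simp add: held_def pos_eq_s_iff)
  qed (use assms(3) in simp)
qed

lemma moves_freely_after_entry:
  assumes "0 \<le> e" "pos y e i = s" "\<not> held e i"
  shows "\<forall>h\<in>{0..1}. y (e + h) i = y e i + h"
proof -
  obtain k where "y e i - s = of_int k"
    using assms(2) by (auto simp: pos_eq_s_iff elim: Ints_cases)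
  then show ?thesis using moves_freely_between_lifts[OF assms(1) _ assms(3), of 1 k] by simp
qed

lemma pos_after_entry:
  assumes "0 \<le> e" "pos y e i = s" "\<not> held e i" "0 \<le> h" "s + h < 1"
  shows "pos y (e + h) i = s + h"
proof -
  have "y (e + h) i = y e i + h"
    using moves_freely_after_entry[OF assms(1-3)] assms(4,5) s_pos by simp
  moreover have "y e i - s \<in> \<int>" using assms(2) by (simp add: pos_eq_s_iff)
  ultimately show ?thesis
    using assms(4,5) s_pos by (simp add: pos_def frac_unique_iff Ints_diff)
qed

lemma reaches_s:
  assumes "0 \<le> tm0"
  shows "\<exists>a\<ge>tm0. pos y a i = s"
proof (cases "pos y tm0 i = s")
  case False
  then have "\<not> held tm0 i" by (simp add: held_def)
  define k where "k = \<lceil>y tm0 i - s\<rceil> - 1"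
  define L where "L = of_int k + 1 - (y tm0 i - s)"
  have "0 \<le> L" "of_int k \<le> y tm0 i - s" by (simp_all add: k_def L_def)
  then have "y (tm0 + L) i = y tm0 i + L"
    using moves_freely_between_lifts[OF assms _ \<open>\<not> held tm0 i\<close>, of L k] by (simp add: L_def)
  then have "pos y (tm0 + L) i = s" by (simp add: pos_eq_s_iff L_def)
  with \<open>0 \<le> L\<close> show ?thesis by (intro exI[of _ "tm0 + L"]) simp
qed auto

text \<open>While S is saturated nothing enters it, and whatever is inside leaves within the
  transit time t - s.\<close>

lemma saturated_S_empties:
  assumes "t - s \<le> u" and saturated: "\<forall>\<sigma>\<in>{u - (t - s)..u}. thr \<le> real (num_in_S s t y \<sigma>)"
  shows "num_in_S s t y u = 0"
proof -
  define u' where "u' = u - (t - s)"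
  have "0 \<le> u'" "u' \<le> u" using assms(1) s_lt_t by (auto simp: u'_def)
  have "\<not> (s < pos y u j \<and> pos y u j < t)" for j
  proof
    assume in_S: "s < pos y u j \<and> pos y u j < t"
    define m where "m = \<lfloor>y u j\<rfloor>"
    have pos_u: "pos y u j = y u j - of_int m" by (simp add: pos_def m_def frac_def)
    show False
    proof (cases "y u' j \<le> s + of_int m")
      case True
      moreover have "s + of_int m < y u j" using in_S pos_u by linarith
      ultimately obtain \<sigma> where "\<sigma> \<in> {u'..<u}" "y \<sigma> j = s + of_int m" "\<not> held \<sigma> j"
        using crosses_unheld[OF \<open>0 \<le> u'\<close> \<open>u' \<le> u\<close>] by blast
      moreover from this have "pos y \<sigma> j = s" by (simp add: pos_eq_s_iff)
      ultimately show False using saturated by (auto simp: held_def u'_def)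
    next
      case False
      have "\<forall>h\<in>{0..t - s}. y (u' + h) j = y u' j + h"
      proof (rule moves_freely[OF \<open>0 \<le> u'\<close>], use s_lt_t in simp, intro ballI impI)
        fix tm assume "tm \<in> {u'..<u' + (t - s)}"
        then have "y u' j \<le> y tm j" "y tm j \<le> y u j"
          using lift_mono \<open>0 \<le> u'\<close> by (auto simp: u'_def)
        then have "y tm j - s \<notin> \<int>"
          using False in_S pos_u s_pos t_le_1 by (intro not_Ints_strictly_between[of m]) auto
        then show "\<not> held tm j" by (simp add: held_def pos_eq_s_iff)
      qed
      then have "y (u' + (t - s)) j = y u' j + (t - s)" using s_lt_t by simp
      then have "y u j = y u' j + (t - s)" by (simp add: u'_def)
      then show False using False in_S pos_u by linarith
    qed
  qed
  then show ?thesis by (simp add: num_in_S_def)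
qed

lemma eventually_enters:
  assumes "0 \<le> tm0"
  shows "\<exists>\<sigma>\<ge>tm0. pos y \<sigma> i = s \<and> \<not> held \<sigma> i"
proof (rule ccontr)
  assume "\<not> ?thesis"
  then have always_held: "\<And>\<sigma>. tm0 \<le> \<sigma> \<Longrightarrow> pos y \<sigma> i = s \<Longrightarrow> held \<sigma> i" by blast
  obtain a where "tm0 \<le> a" "pos y a i = s" using reaches_s[OF assms] by blast
  have "0 \<le> a" "0 \<le> t - s" using assms \<open>tm0 \<le> a\<close> s_lt_t by auto
  have stuck: "\<forall>tm\<in>{a..a + (t - s)}. y tm i = y a i"
  proof (rule stays_put[OF \<open>0 \<le> a\<close> \<open>0 \<le> t - s\<close>], intro ballI impI)
    fix tm assume "tm \<in> {a..<a + (t - s)}" "y tm i = y a i"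
    then show "held tm i" using always_held \<open>tm0 \<le> a\<close> \<open>pos y a i = s\<close> by (simp add: pos_def)
  qed
  have saturated: "thr \<le> real (num_in_S s t y \<sigma>)" if "\<sigma> \<in> {a..a + (t - s)}" for \<sigma>
  proof -
    have "y \<sigma> i = y a i" using stuck that by blast
    with \<open>pos y a i = s\<close> have "pos y \<sigma> i = s" by (simp add: pos_def)
    with that \<open>tm0 \<le> a\<close> always_held show ?thesis by (simp add: held_def)
  qed
  then have "num_in_S s t y (a + (t - s)) = 0"
    using saturated_S_empties[of "a + (t - s)"] \<open>0 \<le> a\<close> by auto
  moreover have "thr \<le> real (num_in_S s t y (a + (t - s)))"
    using saturated \<open>0 \<le> t - s\<close> by simp
  ultimately show False using thr_pos by simp
qed

text \<open>The cyclic order of cells is preserved: while i runs one full lap, a cell j that never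
  meets i must pass the lift of s just ahead of i, and it does so unheld.\<close>

lemma enters_during_lap:
  assumes "0 \<le> \<sigma>" "pos y \<sigma> i = s" "\<not> held \<sigma> i"
    and apart: "\<forall>\<tau>\<in>{\<sigma>..\<sigma>+1}. pos y \<tau> j \<noteq> pos y \<tau> i"
  shows "\<exists>e\<in>{\<sigma>..<\<sigma>+1}. pos y e j = s \<and> \<not> held e j"
proof -
  define g where "g \<tau> = y \<tau> j - y \<tau> i" for \<tau>
  define k where "k = \<lfloor>g \<sigma>\<rfloor>"
  have "continuous_on {\<sigma>..\<sigma>+1} g"
    unfolding g_def by (intro continuous_on_diff continuous_on_lift assms(1))
  moreover have not_int: "g \<tau> \<notin> \<int>" if "\<tau> \<in> {\<sigma>..\<sigma>+1}" for \<tau>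
    using apart that frac_diff_zero[of "y \<tau> j" "y \<tau> i"] by (auto simp: g_def pos_def)
  ultimately have "\<lfloor>g (\<sigma> + 1)\<rfloor> = k"
    unfolding k_def by (intro floor_constant_if_never_integer) auto
  moreover have "g (\<sigma> + 1) \<noteq> of_int k" using not_int[of "\<sigma> + 1"] by auto
  ultimately have "of_int k < g (\<sigma> + 1)" by linarith
  moreover have "y (\<sigma> + 1) i = y \<sigma> i + 1"
    using moves_freely_after_entry[OF assms(1-3)] by simp
  moreover have "g \<sigma> < of_int k + 1" unfolding k_def by linarith
  ultimately have "y \<sigma> j \<le> y \<sigma> i + of_int k + 1" "y \<sigma> i + of_int k + 1 < y (\<sigma> + 1) j"
    by (simp_all add: g_def)
  then obtain e where "e \<in> {\<sigma>..<\<sigma>+1}" "y e j = y \<sigma> i + of_int k + 1" "\<not> held e j"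
    using crosses_unheld[OF assms(1), of "\<sigma> + 1" j "y \<sigma> i + of_int k + 1"] by auto
  moreover have "y \<sigma> i + of_int k + 1 - s \<in> \<int>"
  proof -
    have "y \<sigma> i - s \<in> \<int>" using assms(2) by (simp add: pos_eq_s_iff)
    then have "(y \<sigma> i - s) + of_int (k + 1) \<in> \<int>" by (intro Ints_add Ints_of_int)
    then show ?thesis by (simp add: algebra_simps)
  qed
  ultimately show ?thesis by (metis pos_eq_s_iff)
qed

text \<open>A critical cluster entering S saturates it for the transit time, blocking every entry.\<close>

lemma entries_separated:
  assumes "0 \<le> e" "pos y e i = s" "\<not> held e i" "e < e'" "pos y e' j = s" "\<not> held e' j"
    and "is_cluster y e' C" "i \<in> C" "thr \<le> real (card C)"
  shows "e + (t - s) \<le> e'"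
proof (rule ccontr)
  assume "\<not> e + (t - s) \<le> e'"
  then have "pos y e' i = s + (e' - e)"
    using pos_after_entry[OF assms(1-3), of "e' - e"] assms(4) t_le_1 by simp
  then have "thr \<le> real (num_in_S s t y e')"
    using critical_cluster_in_S_saturates[OF assms(7,9,8)] \<open>\<not> e + (t - s) \<le> e'\<close> assms(4)
    by simp
  with assms(5,6) show False by (simp add: held_def)
qed

lemma persistent_cluster_enters_during_lap:
  assumes "0 \<le> tm0" "tm0 \<le> \<sigma>" "pos y \<sigma> i = s" "\<not> held \<sigma> i"
    and "persists y tm0 A" "persists y tm0 C" "i \<in> A" "j \<in> C"
  shows "\<exists>e\<in>{\<sigma>..<\<sigma>+1}. pos y e j = s \<and> \<not> held e j"
proof (cases "C = A")
  case True
  then have "pos y \<sigma> j = pos y \<sigma> i"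
    using assms(2,5,7,8) cluster_eq_level_set by (fastforce simp: persists_def)
  with assms(3,4) show ?thesis by (intro bexI[of _ \<sigma>]) (auto simp: held_def)
next
  case False
  then have "\<forall>\<tau>\<in>{\<sigma>..\<sigma>+1}. pos y \<tau> j \<noteq> pos y \<tau> i"
    using persistent_clusters_eqI[OF assms(6,5) _ assms(8,7)] assms(2) by force
  moreover have "0 \<le> \<sigma>" using assms(1,2) by linarith
  ultimately show ?thesis using enters_during_lap assms(3,4) by blast
qed

lemma card_persistent_critical_clusters_le:
  assumes "0 \<le> tm0"
  shows "card {C. critical_cluster thr y tm0 C \<and> persists y tm0 C} \<le> nat \<lceil>1 / (t - s)\<rceil>"
    (is "card ?K \<le> _")
proof (cases "?K = {}")
  case False
  have critical: "thr \<le> real (card C)" "persists y tm0 C" if "C \<in> ?K" for C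
    using that by (auto simp: critical_cluster_def)
  have "C \<noteq> {}" if "C \<in> ?K" for C
    using critical(1)[OF that] thr_pos by auto
  then obtain rep where rep: "rep C \<in> C" if "C \<in> ?K" for C
    by (metis all_not_in_conv)
  obtain A where "A \<in> ?K" using False by blast
  then obtain \<sigma> where \<sigma>: "tm0 \<le> \<sigma>" "pos y \<sigma> (rep A) = s" "\<not> held \<sigma> (rep A)"
    using eventually_enters assms by blast
  have "\<forall>C\<in>?K. \<exists>e. e \<in> {\<sigma>..<\<sigma>+1} \<and> pos y e (rep C) = s \<and> \<not> held e (rep C)"
    using persistent_cluster_enters_during_lap[OF assms \<sigma>] critical(2) rep \<open>A \<in> ?K\<close> by blast
  then obtain entry where "\<forall>C\<in>?K. entry C \<in> {\<sigma>..<\<sigma>+1} \<and> pos y (entry C) (rep C) = s \<and>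
      \<not> held (entry C) (rep C)"
    by (rule bchoice[THEN exE])
  then have entry: "entry C \<in> {\<sigma>..<\<sigma>+1}" "pos y (entry C) (rep C) = s"
    "\<not> held (entry C) (rep C)" if "C \<in> ?K" for C
    using that by blast+
  have "inj_on entry ?K"
  proof (rule inj_onI)
    fix C C' assume C: "C \<in> ?K" and C': "C' \<in> ?K" and "entry C = entry C'"
    moreover have "tm0 \<le> entry C" using entry(1)[OF C] \<sigma>(1) by simp
    ultimately show "C = C'"
      using persistent_clusters_eqI[OF critical(2)[OF C] critical(2)[OF C'] _ rep[OF C] rep[OF C']]
        entry(2)[OF C] entry(2)[OF C'] by simp
  qed
  then have "card ?K = card (entry ` ?K)" by (simp add: card_image)
  also have "\<dots> \<le> nat \<lceil>(\<sigma> + 1 - \<sigma>) / (t - s)\<rceil>"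
  proof (rule card_separated_le)
    fix e e' assume "e \<in> entry ` ?K" "e' \<in> entry ` ?K" "e < e'"
    then obtain C C' where C: "C \<in> ?K" "e = entry C" and C': "C' \<in> ?K" "e' = entry C'" by blast
    have "0 \<le> e" "tm0 \<le> e'" using entry(1)[OF C(1)] entry(1)[OF C'(1)] C C' \<sigma>(1) assms by auto
    moreover from this have "is_cluster y e' C" using critical(2)[OF C(1)] by (simp add: persists_def)
    ultimately show "e + (t - s) \<le> e'"
      using entries_separated[OF _ _ _ \<open>e < e'\<close> _ _ _ rep[OF C(1)] critical(1)[OF C(1)]]
        entry(2,3)[OF C(1)] entry(2,3)[OF C'(1)] unfolding C(2) C'(2) by blast
  qed (use entry(1) s_lt_t in auto)
  finally show ?thesis by simp
next
  case True
  then show ?thesis by (metis card.empty zero_le)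
qed

end

theorem mainTheorem3:
  fixes r s t thr tm0 :: real and y :: "real \<Rightarrow> 'c::finite \<Rightarrow> real"
  assumes "0 \<le> r" "r < s" "s < t" "t \<le> 1" "thr > 0"
    and "blocking_trajectory s t thr y"
    and "tm0 \<ge> 0"
  shows "card {C. critical_cluster thr y tm0 C \<and> persists y tm0 C} \<le> nat \<lceil>1 / (t - s)\<rceil>"
proof -
  interpret blocking_model s t thr y
    by unfold_locales (use assms in auto)
  show ?thesis using card_persistent_critical_clusters_le assms(7) by simp
qed

end
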